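(* Let $\tau\in F_2$ and let $a=(0,0)$, $b\in\{0,\tfrac12\}^2$. Then $$|\theta_{a,b}(0,\tau)|\ge 2-\Big(1+\Big(2+\frac{\sqrt2}{\sqrt{\operatorname{Im}\tau_1}}\Big)e^{-\pi\operatorname{Im}\tau_1/2}\Big)\Big(1+\Big(2+\frac{\sqrt2}{\sqrt{\operatorname{Im}\tau_2}}\Big)e^{-\pi\operatorname{Im}\tau_2/2}\Big),$$ and this lower bound is positive when $\operatorname{Im}\tau_1\ge 2$.
   Context: $F_2$ is the standard Siegel fundamental domain for $\mathrm{Sp}_4(\mathbb{Z})$ acting on symmetric complex $2\times2$ matrices $\tau=\begin{pmatrix}\tau_1&\tau_{12}\\ \tau_{12}&\tau_2\end{pmatrix}$ with $\operatorname{Im}\tau>0$; every $\tau\in F_2$ satisfies $|\operatorname{Re}\tau_{ij}|\le 1/2$, $\operatorname{Im}\tau_2\ge\operatorname{Im}\tau_1\ge 2\operatorname{Im}\tau_{12}\ge 0$, $\operatorname{Im}\tau_1\ge\sqrt3/2$. $\theta_{a,b}(Z,\tau)=\sum_{n\in\mathbb{Z}^2}\exp\big(2i\pi(\tfrac12{}^t(n+a)\tau(n+a)+{}^t(n+a)(Z+b))\big)$. *)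

theory Defs
  imports "HOL-Analysis.Analysis"
begin

definition cmat :: "int^2^2 \<Rightarrow> complex^2^2" where
  "cmat M = (\<chi> i j. of_int (M $ i $ j))"

definition Im_mat :: "complex^2^2 \<Rightarrow> real^2^2" where
  "Im_mat \<tau> = (\<chi> i j. Im (\<tau> $ i $ j))"

definition Re_mat :: "complex^2^2 \<Rightarrow> real^2^2" where
  "Re_mat \<tau> = (\<chi> i j. Re (\<tau> $ i $ j))"

definition sym_mat :: "'a^2^2 \<Rightarrow> bool" where
  "sym_mat M \<longleftrightarrow> transpose M = M"

definition pos_def2 :: "real^2^2 \<Rightarrow> bool" where
  "pos_def2 Y \<longleftrightarrow> (\<forall>x::real^2. x \<noteq> 0 \<longrightarrow> x \<bullet> (Y *v x) > 0)"

definition siegel_H2 :: "(complex^2^2) set" where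
  "siegel_H2 = {\<tau>. sym_mat \<tau> \<and> pos_def2 (Im_mat \<tau>)}"

text \<open>Sp_4(Z), written in 2x2 blocks (A B; C D): the block conditions of
  M^T J M = J with J = (0 I; -I 0).\<close>
definition Sp4Z :: "int^2^2 \<Rightarrow> int^2^2 \<Rightarrow> int^2^2 \<Rightarrow> int^2^2 \<Rightarrow> bool" where
  "Sp4Z A B C D \<longleftrightarrow> (sym_mat (transpose A ** C) \<and> sym_mat (transpose B ** D)
                    \<and> transpose A ** D - transpose C ** B = mat 1)"

text \<open>Minkowski reduction for a 2x2 positive definite matrix
  (with the sign normalisation Y_12 >= 0).\<close>
definition minkowski_reduced2 :: "real^2^2 \<Rightarrow> bool" where
  "minkowski_reduced2 Y \<longleftrightarrow> 0 \<le> 2 * Y $ 1 $ 2 \<and> 2 * Y $ 1 $ 2 \<le> Y $ 1 $ 1 \<and> Y $ 1 $ 1 \<le> Y $ 2 $ 2"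

definition siegel_F2 :: "(complex^2^2) set" where
  "siegel_F2 = {\<tau> \<in> siegel_H2.
      (\<forall>i j. \<bar>Re (\<tau> $ i $ j)\<bar> \<le> 1/2)
    \<and> minkowski_reduced2 (Im_mat \<tau>)
    \<and> (\<forall>A B C D. Sp4Z A B C D \<longrightarrow> cmod (det (cmat C ** \<tau> + cmat D)) \<ge> 1)}"

definition theta_char :: "real^2 \<Rightarrow> real^2 \<Rightarrow> complex^2 \<Rightarrow> complex^2^2 \<Rightarrow> complex" where
  "theta_char a b Z \<tau> = (\<Sum>\<^sub>\<infinity>n\<in>(UNIV :: (int^2) set).
     (let v = (\<chi> i. complex_of_real (of_int (n $ i) + a $ i)) in
      exp (2 * pi * \<i> * ((1/2) * (\<Sum>i\<in>UNIV. \<Sum>j\<in>UNIV. v $ i * \<tau> $ i $ j * v $ j)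
                       + (\<Sum>i\<in>UNIV. v $ i * (Z $ i + complex_of_real (b $ i)))))))"

end

theory Submission
  imports Defs
begin

text \<open>The term \<open>n = 0\<close> of the theta series is 1. For \<open>a = 0\<close>, \<open>Z = 0\<close> the term of index \<open>n\<close>
  has modulus \<open>exp (-\<pi> n\<^sup>T Y n)\<close> with \<open>Y = Im \<tau>\<close>, whatever \<open>b\<close> is: the characteristic only
  contributes phases. Minkowski reduction
  \<open>0 \<le> 2 Y\<^sub>1\<^sub>2 \<le> Y\<^sub>1\<^sub>1 \<le> Y\<^sub>2\<^sub>2\<close> gives \<open>n\<^sup>T Y n \<ge> (Y\<^sub>1\<^sub>1 n\<^sub>1\<^sup>2 + Y\<^sub>2\<^sub>2 n\<^sub>2\<^sup>2) / 2\<close>, so the series of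
  moduli is dominated by the product of the one-dimensional sums \<open>\<Sum>\<^sub>m exp (-\<pi> y m\<^sup>2 / 2)\<close>,
  \<open>y = Y\<^sub>1\<^sub>1, Y\<^sub>2\<^sub>2\<close>. Bounding \<open>m\<^sup>2 \<ge> 4 (|m| - 1)\<close> for \<open>|m| \<ge> 2\<close> leaves \<open>1 + 2 exp (-\<pi> y / 2)\<close>
  plus a geometric tail, which is at most \<open>\<surd>2 / \<surd>y \<cdot> exp (-\<pi> y / 2)\<close> once \<open>y \<ge> 1/2\<close>; in \<open>F\<^sub>2\<close>
  even \<open>Y\<^sub>1\<^sub>1 \<ge> \<surd>3 / 2\<close>, because \<open>|\<tau>\<^sub>1\<^sub>1| \<ge> 1\<close> and \<open>|Re \<tau>\<^sub>1\<^sub>1| \<le> 1/2\<close>.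
  Hence \<open>|\<theta>| \<ge> 1 - (P\<^sub>1 P\<^sub>2 - 1)\<close> with \<open>P\<^sub>i\<close> these bounds.\<close>

lemma siegel_F2_symmetric:
  assumes "\<tau> \<in> siegel_F2"
  shows "\<tau> $ 2 $ 1 = \<tau> $ 1 $ 2"
proof -
  have "transpose \<tau> = \<tau>"
    using assms by (simp add: siegel_F2_def siegel_H2_def sym_mat_def)
  then have "transpose \<tau> $ 1 $ 2 = \<tau> $ 1 $ 2"
    by simp
  then show ?thesis
    by (simp add: transpose_def)
qed

lemma siegel_F2_Im_reduced:
  assumes "\<tau> \<in> siegel_F2"
  shows "0 \<le> Im (\<tau> $ 1 $ 2)" "2 * Im (\<tau> $ 1 $ 2) \<le> Im (\<tau> $ 1 $ 1)"
    and "Im (\<tau> $ 1 $ 1) \<le> Im (\<tau> $ 2 $ 2)"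
  using assms by (auto simp: siegel_F2_def minkowski_reduced2_def Im_mat_def)

lemma siegel_F2_norm_diag_ge_1:
  assumes "\<tau> \<in> siegel_F2"
  shows "1 \<le> cmod (\<tau> $ 1 $ 1)"
proof -
  \<comment> \<open>the embedding of \<open>(0 -1; 1 0) \<in> SL\<^sub>2(\<int>)\<close> acting on \<open>\<tau>\<^sub>1\<^sub>1\<close>\<close>
  define C :: "int^2^2" where "C = (\<chi> i j. if i = 1 \<and> j = 1 then 1 else 0)"
  define D :: "int^2^2" where "D = (\<chi> i j. if i = 2 \<and> j = 2 then 1 else 0)"
  have "Sp4Z D (-C) C D"
    unfolding Sp4Z_def sym_mat_def C_def D_def
    by (simp add: matrix_matrix_mult_def transpose_def mat_def vec_eq_iff forall_2 sum_2)
  then have "1 \<le> cmod (det (cmat C ** \<tau> + cmat D))"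
    using assms by (auto simp: siegel_F2_def)
  also have "det (cmat C ** \<tau> + cmat D) = \<tau> $ 1 $ 1"
    by (simp add: det_2 cmat_def C_def D_def matrix_matrix_mult_def sum_2)
  finally show ?thesis .
qed

lemma siegel_F2_Im_ge:
  assumes "\<tau> \<in> siegel_F2"
  shows "sqrt 3 / 2 \<le> Im (\<tau> $ 1 $ 1)"
proof -
  have "\<bar>Re (\<tau> $ 1 $ 1)\<bar> \<le> 1/2"
    using assms by (simp add: siegel_F2_def)
  then have "\<bar>Re (\<tau> $ 1 $ 1)\<bar> ^ 2 \<le> (1/2) ^ 2"
    by (intro power_mono) auto
  then have "Re (\<tau> $ 1 $ 1) ^ 2 \<le> 1/4"
    by (simp add: power_divide)
  moreover have "1 \<le> Re (\<tau> $ 1 $ 1) ^ 2 + Im (\<tau> $ 1 $ 1) ^ 2"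
    using siegel_F2_norm_diag_ge_1[OF assms] by (simp add: cmod_def)
  ultimately have "sqrt (3/4) \<le> sqrt (Im (\<tau> $ 1 $ 1) ^ 2)"
    by (intro real_sqrt_le_mono) linarith
  moreover have "0 \<le> Im (\<tau> $ 1 $ 1)"
    using siegel_F2_Im_reduced[OF assms] by linarith
  ultimately show ?thesis
    by (simp add: real_sqrt_divide)
qed

lemma gauss_sum_geometric_bound:
  fixes c :: real
  assumes "0 < c" and "1 \<le> N"
  defines "r \<equiv> exp (-4 * c)"
  shows "(\<Sum>m = -int N..int N. exp (-c * of_int m ^ 2)) + 2 * r ^ N / (1 - r)
           \<le> 1 + 2 * exp (-c) + 2 * r / (1 - r)"
  using \<open>1 \<le> N\<close>
proof (induction N rule: nat_induct_at_least)
  case base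
  have "{-int 1..int 1} = {-1, 0, 1}"
    by auto
  then show ?case
    by simp
next
  case (Suc N)
  have r: "0 < r" "r < 1"
    using \<open>0 < c\<close> by (auto simp: r_def)
  have "-c * of_int (int (Suc N)) ^ 2 \<le> real N * (-4 * c)"
  proof -
    have "4 * real N \<le> (real N + 1) ^ 2"
      using zero_le_power2[of "real N - 1"] by (simp add: power2_eq_square algebra_simps)
    then show ?thesis
      using \<open>0 < c\<close> by (simp add: algebra_simps)
  qed
  then have tail: "exp (-c * of_int (int (Suc N)) ^ 2) \<le> r ^ N"
    by (simp add: r_def exp_of_nat_mult[symmetric])
  have split: "{-int (Suc N)..int (Suc N)}
      = insert (-int (Suc N)) (insert (int (Suc N)) {-int N..int N})"
    by auto
  have "(\<Sum>m = -int (Suc N)..int (Suc N). exp (-c * of_int m ^ 2))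
      = (\<Sum>m = -int N..int N. exp (-c * of_int m ^ 2)) + 2 * exp (-c * of_int (int (Suc N)) ^ 2)"
    unfolding split by (simp add: power2_eq_square algebra_simps)
  moreover have "2 * r ^ N + 2 * r ^ Suc N / (1 - r) = 2 * r ^ N / (1 - r)"
    using r by (simp add: field_simps)
  ultimately show ?case
    using tail Suc.IH by linarith
qed

lemma gauss_sum_le:
  fixes c :: real
  assumes "0 < c"
  shows "(\<Sum>m = -int N..int N. exp (-c * of_int m ^ 2))
           \<le> 1 + 2 * exp (-c) + 2 * exp (-4 * c) / (1 - exp (-4 * c))"
proof (cases "N = 0")
  case True
  have "0 \<le> 2 * exp (-4 * c) / (1 - exp (-4 * c))"
    using assms by simp
  then show ?thesis
    using True by simp
next
  case False
  have "0 \<le> 2 * exp (-4 * c) ^ N / (1 - exp (-4 * c))"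
    using assms by simp
  then show ?thesis
    using gauss_sum_geometric_bound[OF assms, of N] False by simp
qed

lemma four_sqrt_le_exp:
  fixes y :: real
  assumes "0 \<le> y"
  shows "4 * sqrt y \<le> exp (3 * pi * y / 2)"
proof -
  have "4 * sqrt y \<le> 1 + 9/2 * sqrt y ^ 2"
    using zero_le_power2[of "sqrt y - 4/9"] by (simp add: power2_eq_square algebra_simps)
  also have "\<dots> \<le> 1 + 3 * pi * y / 2"
    using assms pi_gt3 mult_right_mono[of 3 pi y] by simp
  also have "\<dots> \<le> exp (3 * pi * y / 2)"
    by (rule exp_ge_add_one_self)
  finally show ?thesis .
qed

lemma gauss_tail_le:
  fixes y :: real
  assumes "1/2 \<le> y"
  shows "2 * exp (-4 * (pi * y / 2)) / (1 - exp (-4 * (pi * y / 2)))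
           \<le> sqrt 2 / sqrt y * exp (- pi * y / 2)"
proof -
  have "4 * sqrt y * exp (- 3 * pi * y / 2) \<le> exp (3 * pi * y / 2) * exp (- 3 * pi * y / 2)"
    using assms by (intro mult_right_mono four_sqrt_le_exp) auto
  also have "\<dots> \<le> sqrt 2"
    by (simp add: exp_add[symmetric])
  finally have "4 * sqrt y * exp (- 3 * pi * y / 2) \<le> sqrt 2" .
  define e where "e = exp (- pi * y / 2)"
  have e: "0 < e" "exp (-4 * (pi * y / 2)) = e ^ 4"
    by (simp_all add: e_def exp_of_nat_mult[symmetric])
  have "3 * y \<le> pi * y"
    using assms pi_gt3 by (intro mult_right_mono) auto
  then have "2 \<le> 1 + 2 * pi * y"
    using assms by linarith
  also have "\<dots> \<le> exp (2 * pi * y)"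
    by (rule exp_ge_add_one_self)
  finally have "e ^ 4 \<le> 1/2"
    by (simp add: e_def exp_of_nat_mult[symmetric] exp_minus field_simps)
  then have "2 * e ^ 4 / (1 - e ^ 4) \<le> 4 * e ^ 4"
    using e by (simp add: field_simps power_eq_if)
  also have "4 * e ^ 4 = 4 * sqrt y * exp (- 3 * pi * y / 2) * e / sqrt y"
    using assms by (simp add: e_def exp_of_nat_mult[symmetric] exp_add[symmetric] field_simps)
  also have "\<dots> \<le> sqrt 2 * e / sqrt y"
    using \<open>4 * sqrt y * exp (- 3 * pi * y / 2) \<le> sqrt 2\<close> e assms
    by (intro divide_right_mono mult_right_mono) auto
  also have "\<dots> = sqrt 2 / sqrt y * e"
    by simp
  finally show ?thesis
    unfolding e(2) e_def[symmetric] .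
qed

definition gauss_bound :: "real \<Rightarrow> real" where
  "gauss_bound y = 1 + (2 + sqrt 2 / sqrt y) * exp (- pi * y / 2)"

lemma gauss_sum_le_gauss_bound:
  fixes y :: real
  assumes "1/2 \<le> y"
  shows "(\<Sum>m = -int N..int N. exp (- (pi * y / 2) * of_int m ^ 2)) \<le> gauss_bound y"
  using gauss_sum_le[of "pi * y / 2" N] gauss_tail_le[OF assms] assms
  by (simp add: gauss_bound_def algebra_simps)

lemma gauss_bound_ge_one: "0 \<le> y \<Longrightarrow> 1 \<le> gauss_bound y"
  by (simp add: gauss_bound_def)

lemma gauss_bound_le:
  fixes y :: real
  assumes "2 \<le> y"
  shows "gauss_bound y \<le> 11/8"
proof -
  have "sqrt 2 / sqrt y \<le> 1"
    using assms by simp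
  have "(8::real) \<le> exp 1 ^ 3"
    using power_mono[OF exp_ge_add_one_self[of 1], of 3] by simp
  also have "\<dots> \<le> exp (pi * y / 2)"
    using pi_gt3 assms mult_mono[of 3 pi 2 y] by (simp add: exp_of_nat_mult[symmetric])
  finally have "exp (- pi * y / 2) \<le> 1/8"
    by (simp add: exp_minus field_simps)
  with \<open>sqrt 2 / sqrt y \<le> 1\<close> have "(2 + sqrt 2 / sqrt y) * exp (- pi * y / 2) \<le> 3 * (1/8)"
    by (intro mult_mono) auto
  then show ?thesis
    by (simp add: gauss_bound_def)
qed

lemma sum_vector2_box:
  fixes g h :: "int \<Rightarrow> real"
  shows "(\<Sum>n\<in>(\<lambda>(a, b). vector [a, b] :: int^2) ` (I \<times> J). g (n $ 1) * h (n $ 2))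
           = (\<Sum>a\<in>I. g a) * (\<Sum>b\<in>J. h b)"
proof -
  have "inj_on (\<lambda>(a, b). vector [a, b] :: int^2) (I \<times> J)"
    by (auto simp: inj_on_def) (metis vector_2)+
  then have "(\<Sum>n\<in>(\<lambda>(a, b). vector [a, b] :: int^2) ` (I \<times> J). g (n $ 1) * h (n $ 2))
               = (\<Sum>(a, b)\<in>I \<times> J. g a * h b)"
    by (subst sum.reindex) (simp_all add: split_def)
  also have "\<dots> = (\<Sum>a\<in>I. g a) * (\<Sum>b\<in>J. h b)"
    by (simp add: sum.cartesian_product sum_product)
  finally show ?thesis .
qed

lemma sum_vector2_le_mult:
  fixes g h :: "int \<Rightarrow> real" and F :: "(int^2) set"
  assumes "\<And>m. 0 \<le> g m" "\<And>m. 0 \<le> h m"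
    and "\<And>N. (\<Sum>m = -int N..int N. g m) \<le> G" "\<And>N. (\<Sum>m = -int N..int N. h m) \<le> H"
    and "finite F"
  shows "(\<Sum>n\<in>F. g (n $ 1) * h (n $ 2)) \<le> G * H"
proof -
  define N where "N = nat (\<Sum>n\<in>F. \<bar>n $ 1\<bar> + \<bar>n $ 2\<bar>)"
  define I where "I = {-int N..int N}"
  define B where "B = (\<lambda>(a, b). vector [a, b] :: int^2) ` (I \<times> I)"
  have "F \<subseteq> B"
  proof
    fix n assume "n \<in> F"
    then have "\<bar>n $ 1\<bar> + \<bar>n $ 2\<bar> \<le> (\<Sum>n\<in>F. \<bar>n $ 1\<bar> + \<bar>n $ 2\<bar>)"
      using \<open>finite F\<close> by (intro member_le_sum) auto
    then have "(n $ 1, n $ 2) \<in> I \<times> I"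
      by (auto simp: I_def N_def)
    moreover have "n = vector [n $ 1, n $ 2]"
      by (simp add: vec_eq_iff forall_2)
    ultimately show "n \<in> B"
      unfolding B_def by (metis (no_types, lifting) case_prod_conv image_eqI)
  qed
  then have "(\<Sum>n\<in>F. g (n $ 1) * h (n $ 2)) \<le> (\<Sum>n\<in>B. g (n $ 1) * h (n $ 2))"
    using assms(1,2) by (intro sum_mono2) (auto simp: B_def I_def)
  also have "\<dots> = (\<Sum>a\<in>I. g a) * (\<Sum>b\<in>I. h b)"
    unfolding B_def by (rule sum_vector2_box)
  also have "\<dots> \<le> G * H"
  proof (rule mult_mono)
    show "0 \<le> G"
      using assms(1)[of 0] assms(3)[of 0] by simp
  qed (use assms in \<open>auto simp: I_def intro: sum_nonneg\<close>)
  finally show ?thesis .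
qed

lemma norm_infsum_ge_of_finite_sums_le:
  fixes f :: "'a \<Rightarrow> 'b::banach"
  assumes "\<And>F. finite F \<Longrightarrow> (\<Sum>x\<in>F. norm (f x)) \<le> P"
  shows "2 * norm (f a) - P \<le> norm (\<Sum>\<^sub>\<infinity>x. f x)"
proof -
  have norm_summable: "(\<lambda>x. norm (f x)) summable_on A" for A
    unfolding abs_summable_iff_bdd_above by (rule bdd_aboveI2[where M = P]) (auto intro: assms)
  then have "\<And>A. f summable_on A"
    by (rule abs_summable_summable)
  have "UNIV = insert a (-{a})"
    by blast
  then have "(\<Sum>\<^sub>\<infinity>x. f x) = (\<Sum>\<^sub>\<infinity>x\<in>insert a (-{a}). f x)"
    by (rule arg_cong)
  also have "\<dots> = f a + (\<Sum>\<^sub>\<infinity>x\<in>-{a}. f x)"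
    by (rule infsum_insert) (auto intro: \<open>\<And>A. f summable_on A\<close>)
  finally have split: "(\<Sum>\<^sub>\<infinity>x. f x) = f a + (\<Sum>\<^sub>\<infinity>x\<in>-{a}. f x)" .
  have "norm (\<Sum>\<^sub>\<infinity>x\<in>-{a}. f x) \<le> (\<Sum>\<^sub>\<infinity>x\<in>-{a}. norm (f x))"
    by (rule norm_infsum_bound[OF norm_summable])
  moreover have "(\<Sum>\<^sub>\<infinity>x\<in>-{a}. norm (f x)) \<le> P - norm (f a)"
  proof (rule infsum_le_finite_sums[OF norm_summable])
    fix F assume "finite F" "F \<subseteq> -{a}"
    then have "norm (f a) + (\<Sum>x\<in>F. norm (f x)) = (\<Sum>x\<in>insert a F. norm (f x))"
      by auto
    also have "\<dots> \<le> P"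
      using \<open>finite F\<close> by (intro assms) simp
    finally show "(\<Sum>x\<in>F. norm (f x)) \<le> P - norm (f a)"
      by simp
  qed
  ultimately show ?thesis
    unfolding split using norm_diff_ineq[of "f a" "\<Sum>\<^sub>\<infinity>x\<in>-{a}. f x"] by linarith
qed

definition theta_term :: "real^2 \<Rightarrow> real^2 \<Rightarrow> complex^2 \<Rightarrow> complex^2^2 \<Rightarrow> int^2 \<Rightarrow> complex" where
  "theta_term a b Z \<tau> n = (let v = (\<chi> i. complex_of_real (of_int (n $ i) + a $ i)) in
      exp (2 * pi * \<i> * ((1/2) * (\<Sum>i\<in>UNIV. \<Sum>j\<in>UNIV. v $ i * \<tau> $ i $ j * v $ j)
                       + (\<Sum>i\<in>UNIV. v $ i * (Z $ i + complex_of_real (b $ i))))))"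

lemma theta_char_eq_infsum: "theta_char a b Z \<tau> = (\<Sum>\<^sub>\<infinity>n. theta_term a b Z \<tau> n)"
  unfolding theta_char_def theta_term_def ..

lemma theta_term_zero: "theta_term 0 b 0 \<tau> 0 = 1"
  by (simp add: theta_term_def)

lemma norm_theta_term:
  assumes "\<tau> $ 2 $ 1 = \<tau> $ 1 $ 2"
  shows "norm (theta_term 0 b 0 \<tau> n) = exp (-pi * (Im (\<tau> $ 1 $ 1) * of_int (n $ 1) ^ 2
           + 2 * Im (\<tau> $ 1 $ 2) * of_int (n $ 1) * of_int (n $ 2) + Im (\<tau> $ 2 $ 2) * of_int (n $ 2) ^ 2))"
  using assms by (simp add: theta_term_def Let_def sum_2 norm_exp_eq_Re power2_eq_square)

lemma quadratic_form_ge_diagonal: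
  fixes y1 y2 y12 u v :: real
  assumes "0 \<le> y12" "2 * y12 \<le> y1" "2 * y12 \<le> y2"
  shows "y1 * u\<^sup>2 / 2 + y2 * v\<^sup>2 / 2 \<le> y1 * u\<^sup>2 + 2 * y12 * u * v + y2 * v\<^sup>2"
proof -
  have "y12 * u\<^sup>2 \<le> y1 / 2 * u\<^sup>2"
    using assms by (intro mult_right_mono) auto
  moreover have "y12 * v\<^sup>2 \<le> y2 / 2 * v\<^sup>2"
    using assms by (intro mult_right_mono) auto
  moreover have "0 \<le> y12 * (u + v)\<^sup>2"
    using assms by simp
  moreover have "y12 * (u + v)\<^sup>2 = y12 * u\<^sup>2 + 2 * y12 * u * v + y12 * v\<^sup>2"
    by (simp add: power2_eq_square algebra_simps)
  ultimately show ?thesis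
    by linarith
qed

lemma norm_theta_term_le:
  assumes "\<tau> \<in> siegel_F2"
  shows "norm (theta_term 0 b 0 \<tau> n) \<le> exp (- (pi * Im (\<tau> $ 1 $ 1) / 2) * of_int (n $ 1) ^ 2)
           * exp (- (pi * Im (\<tau> $ 2 $ 2) / 2) * of_int (n $ 2) ^ 2)"
proof -
  have "Im (\<tau> $ 1 $ 1) * of_int (n $ 1) ^ 2 / 2 + Im (\<tau> $ 2 $ 2) * of_int (n $ 2) ^ 2 / 2
      \<le> Im (\<tau> $ 1 $ 1) * of_int (n $ 1) ^ 2 + 2 * Im (\<tau> $ 1 $ 2) * of_int (n $ 1) * of_int (n $ 2)
         + Im (\<tau> $ 2 $ 2) * of_int (n $ 2) ^ 2" (is "?diagonal \<le> ?form")
    using siegel_F2_Im_reduced[OF assms] by (intro quadratic_form_ge_diagonal) auto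
  have "norm (theta_term 0 b 0 \<tau> n) = exp (-pi * ?form)"
    by (rule norm_theta_term[OF siegel_F2_symmetric[OF assms]])
  also have "\<dots> \<le> exp (-pi * ?diagonal)"
    using \<open>?diagonal \<le> ?form\<close> by simp
  also have "\<dots> = exp (- (pi * Im (\<tau> $ 1 $ 1) / 2) * of_int (n $ 1) ^ 2)
      * exp (- (pi * Im (\<tau> $ 2 $ 2) / 2) * of_int (n $ 2) ^ 2)"
    by (simp add: exp_add[symmetric] algebra_simps)
  finally show ?thesis .
qed

lemma sum_norm_theta_term_le:
  assumes "\<tau> \<in> siegel_F2" and "finite F"
  shows "(\<Sum>n\<in>F. norm (theta_term 0 b 0 \<tau> n))
           \<le> gauss_bound (Im (\<tau> $ 1 $ 1)) * gauss_bound (Im (\<tau> $ 2 $ 2))"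
proof -
  have "1 \<le> sqrt 3"
    by simp
  then have y: "1/2 \<le> Im (\<tau> $ 1 $ 1)" "1/2 \<le> Im (\<tau> $ 2 $ 2)"
    using siegel_F2_Im_ge[OF assms(1)] siegel_F2_Im_reduced[OF assms(1)] by linarith+
  define g where "g y m = exp (- (pi * y / 2) * of_int m ^ 2)" for y :: real and m :: int
  have "(\<Sum>n\<in>F. norm (theta_term 0 b 0 \<tau> n))
      \<le> (\<Sum>n\<in>F. g (Im (\<tau> $ 1 $ 1)) (n $ 1) * g (Im (\<tau> $ 2 $ 2)) (n $ 2))"
    unfolding g_def by (intro sum_mono norm_theta_term_le assms(1))
  also have "\<dots> \<le> gauss_bound (Im (\<tau> $ 1 $ 1)) * gauss_bound (Im (\<tau> $ 2 $ 2))"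
    using y \<open>finite F\<close> unfolding g_def
    by (intro sum_vector2_le_mult gauss_sum_le_gauss_bound) auto
  finally show ?thesis .
qed

theorem mainTheorem13:
  fixes \<tau> :: "complex^2^2" and b :: "real^2"
  assumes "\<tau> \<in> siegel_F2"
    and "b $ 1 \<in> {0, 1/2}" and "b $ 2 \<in> {0, 1/2}"
  defines "y1 \<equiv> Im (\<tau> $ 1 $ 1)" and "y2 \<equiv> Im (\<tau> $ 2 $ 2)"
  defines "L \<equiv> 2 - (1 + (2 + sqrt 2 / sqrt y1) * exp (- pi * y1 / 2))
                  * (1 + (2 + sqrt 2 / sqrt y2) * exp (- pi * y2 / 2))"
  shows "cmod (theta_char 0 b 0 \<tau>) \<ge> L \<and> (y1 \<ge> 2 \<longrightarrow> L > 0)"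
proof
  have L: "L = 2 - gauss_bound y1 * gauss_bound y2"
    unfolding L_def gauss_bound_def ..
  show "cmod (theta_char 0 b 0 \<tau>) \<ge> L"
    using norm_infsum_ge_of_finite_sums_le[OF sum_norm_theta_term_le[OF assms(1), where b = b], where a = 0]
    unfolding L theta_char_eq_infsum theta_term_zero y1_def y2_def by simp
  show "y1 \<ge> 2 \<longrightarrow> L > 0"
  proof
    assume "y1 \<ge> 2"
    moreover have "y1 \<le> y2"
      using siegel_F2_Im_reduced[OF assms(1)] by (simp add: y1_def y2_def)
    ultimately have "gauss_bound y1 * gauss_bound y2 \<le> 11/8 * (11/8)"
      using gauss_bound_le[of y1] gauss_bound_le[of y2] gauss_bound_ge_one[of y2]
      by (intro mult_mono) auto
    then show "L > 0"
      unfolding L by simp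
  qed
qed

end
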